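(* Let $P$ be any poset. Then there exists no strictly isotone map $f:\mathrm{ch}\text{-}\mathrm{Id}(P)\to P$. Consequently, there exists no embedding of posets $f:\mathrm{Id}(P)\to P$.
   Context: For a poset $P$ and a subset $X\subseteq P$, write $P\downarrow X=\{y\in P\mid \exists x\in X,\ y\le x\}$. A downset of $P$ is a subset $d$ with $x\le y\in d\Rightarrow x\in d$. An ideal of $P$ is a (possibly empty) upward directed downset of $P$ (upward directed: every two elements have a common upper bound in the set). $\mathrm{Id}(P)$ denotes the set of all ideals of $P$ (including $\emptyset$), partially ordered by inclusion. $\mathrm{ch}\text{-}\mathrm{Id}(P)$ denotes the subposet of $\mathrm{Id}(P)$ consisting of the ideals of the form $P\downarrow C$ with $C\subseteq P$ a chain (possibly empty). A map $f:P\to Q$ of posets is strictly isotone if $x<y$ in $P$ implies $f(x)<f(y)$ in $Q$. *)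

theory Defs
  imports Main
begin

text \<open>A poset is represented as a carrier set P inside a type of class order,
  with the induced order. Every poset (including the empty one) is of this form.\<close>

definition down_of :: "'a::order set \<Rightarrow> 'a set \<Rightarrow> 'a set" where
  "down_of P X = {y \<in> P. \<exists>x\<in>X. y \<le> x}"

definition is_chain_in :: "'a::order set \<Rightarrow> 'a set \<Rightarrow> bool" where
  "is_chain_in P C \<longleftrightarrow> C \<subseteq> P \<and> (\<forall>x\<in>C. \<forall>y\<in>C. x \<le> y \<or> y \<le> x)"

definition is_ideal :: "'a::order set \<Rightarrow> 'a set \<Rightarrow> bool" where
  "is_ideal P d \<longleftrightarrow> d \<subseteq> P
     \<and> (\<forall>x\<in>P. \<forall>y\<in>d. x \<le> y \<longrightarrow> x \<in> d)
     \<and> (\<forall>x\<in>d. \<forall>y\<in>d. \<exists>z\<in>d. x \<le> z \<and> y \<le> z)"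

definition Id_of :: "'a::order set \<Rightarrow> 'a set set" where
  "Id_of P = {d. is_ideal P d}"

definition chId_of :: "'a::order set \<Rightarrow> 'a set set" where
  "chId_of P = {d \<in> Id_of P. \<exists>C. is_chain_in P C \<and> d = down_of P C}"

definition strictly_isotone_on :: "'a set set \<Rightarrow> 'b::order set \<Rightarrow> ('a set \<Rightarrow> 'b) \<Rightarrow> bool" where
  "strictly_isotone_on A Q f \<longleftrightarrow> (\<forall>d\<in>A. f d \<in> Q) \<and>
     (\<forall>d\<in>A. \<forall>e\<in>A. d \<subset> e \<longrightarrow> f d < f e)"

definition order_embedding_on :: "'a set set \<Rightarrow> 'b::order set \<Rightarrow> ('a set \<Rightarrow> 'b) \<Rightarrow> bool" where
  "order_embedding_on A Q f \<longleftrightarrow> (\<forall>d\<in>A. f d \<in> Q) \<and>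
     (\<forall>d\<in>A. \<forall>e\<in>A. d \<subseteq> e \<longleftrightarrow> f d \<le> f e)"

end

theory Submission
  imports Defs
begin

text \<open>Call a chain C of P bounded by f if every element of C lies strictly below f(\<down>C).
  For a strictly isotone f the bounded chains are closed under unions of
  \<subseteq>-chains, so Zorn's lemma gives a maximal one M. But a = f(\<down>M) lies strictly
  above M, so M \<union> {a} is again a chain, and its downset strictly contains \<down>M;
  hence f(\<down>(M \<union> {a})) > a and M \<union> {a} is a strictly larger bounded chain.
  An embedding of Id(P) restricts to a strictly isotone map on ch-Id(P).\<close>

lemma down_of_mono: "X \<subseteq> Y \<Longrightarrow> down_of P X \<subseteq> down_of P Y"
  unfolding down_of_def by blast

lemma down_of_in_chId_of:
  assumes C: "is_chain_in P C"
  shows "down_of P C \<in> chId_of P"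
proof -
  have "is_ideal P (down_of P C)"
    unfolding is_ideal_def
  proof (intro conjI ballI impI)
    show "down_of P C \<subseteq> P" by (auto simp: down_of_def)
  next
    fix x y assume "x \<in> P" "y \<in> down_of P C" "x \<le> y"
    then show "x \<in> down_of P C" by (auto simp: down_of_def intro: order_trans)
  next
    fix x y assume "x \<in> down_of P C" "y \<in> down_of P C"
    then obtain a b where a: "a \<in> C" "x \<le> a" and b: "b \<in> C" "y \<le> b"
      by (auto simp: down_of_def)
    have "a \<in> down_of P C" "b \<in> down_of P C"
      using a b C by (auto simp: down_of_def is_chain_in_def)
    moreover have "a \<le> b \<or> b \<le> a" using a b C by (auto simp: is_chain_in_def)
    ultimately show "\<exists>z\<in>down_of P C. x \<le> z \<and> y \<le> z"
      using a b by (meson order_trans)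
  qed
  then show ?thesis using C by (auto simp: chId_of_def Id_of_def)
qed

lemma chId_of_subset_Id_of: "chId_of P \<subseteq> Id_of P"
  unfolding chId_of_def by blast

lemma is_chain_in_insert_upper:
  assumes "is_chain_in P C" "a \<in> P" "\<forall>x\<in>C. x \<le> a"
  shows "is_chain_in P (insert a C)"
  using assms unfolding is_chain_in_def by blast

lemma is_chain_in_Union:
  assumes "Ch \<in> chains {C. is_chain_in P C}"
  shows "is_chain_in P (\<Union>Ch)"
  unfolding is_chain_in_def
proof (intro conjI ballI)
  show "\<Union>Ch \<subseteq> P" using assms by (auto simp: chains_def is_chain_in_def)
next
  fix x y assume "x \<in> \<Union>Ch" "y \<in> \<Union>Ch"
  then obtain X Y where XY: "X \<in> Ch" "Y \<in> Ch" "x \<in> X" "y \<in> Y" by blast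
  then have "X \<subseteq> Y \<or> Y \<subseteq> X" using assms by (auto simp: chains_def chain_subset_def)
  then obtain Z where "Z \<in> Ch" "x \<in> Z" "y \<in> Z" using XY by blast
  then show "x \<le> y \<or> y \<le> x" using assms by (auto simp: chains_def is_chain_in_def)
qed

lemma strictly_isotone_on_mono:
  assumes "strictly_isotone_on A Q f" "d \<in> A" "e \<in> A" "d \<subseteq> e"
  shows "f d \<le> f e"
  using assms unfolding strictly_isotone_on_def by (metis order_refl psubsetI less_imp_le)

lemma order_embedding_on_imp_strictly_isotone_on:
  assumes "order_embedding_on A Q f" "B \<subseteq> A"
  shows "strictly_isotone_on B Q f"
  using assms unfolding order_embedding_on_def strictly_isotone_on_def
  by (metis less_le_not_le psubset_eq subsetD)

definition bounded_chains :: "'a::order set \<Rightarrow> ('a set \<Rightarrow> 'a) \<Rightarrow> 'a set set" where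
  "bounded_chains P f = {C. is_chain_in P C \<and> (\<forall>x\<in>C. x < f (down_of P C))}"

lemma bounded_chains_Union:
  assumes f: "strictly_isotone_on (chId_of P) P f"
    and Ch: "Ch \<in> chains (bounded_chains P f)"
  shows "\<Union>Ch \<in> bounded_chains P f"
proof -
  have "Ch \<in> chains {C. is_chain_in P C}"
    using Ch by (auto simp: chains_def bounded_chains_def)
  then have U: "is_chain_in P (\<Union>Ch)" by (rule is_chain_in_Union)
  have "x < f (down_of P (\<Union>Ch))" if "X \<in> Ch" "x \<in> X" for X x
  proof -
    have X: "X \<in> bounded_chains P f" using Ch \<open>X \<in> Ch\<close> by (auto simp: chains_def)
    then have "x < f (down_of P X)" using \<open>x \<in> X\<close> by (simp add: bounded_chains_def)
    also have "f (down_of P X) \<le> f (down_of P (\<Union>Ch))"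
      using X U \<open>X \<in> Ch\<close>
      by (intro strictly_isotone_on_mono[OF f] down_of_in_chId_of down_of_mono)
         (auto simp: bounded_chains_def)
    finally show ?thesis .
  qed
  with U show ?thesis by (auto simp: bounded_chains_def)
qed

lemma bounded_chains_insert:
  assumes f: "strictly_isotone_on (chId_of P) P f"
    and M: "M \<in> bounded_chains P f"
  defines "a \<equiv> f (down_of P M)"
  shows "insert a M \<in> bounded_chains P f" and "a \<notin> M"
proof -
  have Mch: "is_chain_in P M" and below: "\<forall>x\<in>M. x < a"
    using M by (auto simp: bounded_chains_def a_def)
  then show "a \<notin> M" by blast
  have "a \<in> P" using f down_of_in_chId_of[OF Mch] by (auto simp: strictly_isotone_on_def a_def)
  then have aM: "is_chain_in P (insert a M)"
    using is_chain_in_insert_upper[OF Mch] below by (simp add: less_imp_le)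
  have "a \<notin> down_of P M" using below by (auto simp: down_of_def dest: leD)
  moreover have "a \<in> down_of P (insert a M)" using \<open>a \<in> P\<close> by (auto simp: down_of_def)
  ultimately have "down_of P M \<subset> down_of P (insert a M)"
    using down_of_mono[of M "insert a M" P] by blast
  then have "a < f (down_of P (insert a M))"
    using f down_of_in_chId_of[OF Mch] down_of_in_chId_of[OF aM]
    unfolding strictly_isotone_on_def a_def by blast
  with below aM show "insert a M \<in> bounded_chains P f"
    by (auto simp: bounded_chains_def intro: less_trans)
qed

lemma no_strictly_isotone_on_chId_of:
  fixes P :: "'a::order set"
  shows "\<not> strictly_isotone_on (chId_of P) P f"
proof
  assume f: "strictly_isotone_on (chId_of P) P f"
  obtain M where M: "M \<in> bounded_chains P f"
    and max: "\<forall>X\<in>bounded_chains P f. M \<subseteq> X \<longrightarrow> X = M"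
    using Zorn_Lemma[of "bounded_chains P f"] bounded_chains_Union[OF f] by blast
  show False
    using bounded_chains_insert[OF f M] max by blast
qed

theorem theorem2p1:
  fixes P :: "'a::order set"
  shows "(\<nexists>f. strictly_isotone_on (chId_of P) P f) \<and> (\<nexists>f. order_embedding_on (Id_of P) P f)"
  using no_strictly_isotone_on_chId_of
    order_embedding_on_imp_strictly_isotone_on[OF _ chId_of_subset_Id_of]
  by blast

end
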